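(* Let $\sigma>0$ and let $(n_k)$ be a strictly increasing sequence of positive integers. For any $H\in(\tfrac12,H_c)$ there exists $\varepsilon>0$ such that $$P(|\widehat{\mathcal{Y}}^H_{n_k}|>g^H_{n_k}(1-\varepsilon)\ \text{ult.})=0,$$ and for any $H\in(H_c,1)$ there exists $\delta>0$ such that $$P(|\widehat{\mathcal{Y}}^H_{n_k}|>g^H_{n_k}(1+\delta)\ \text{i.o.})=1.$$
   Context: For $h\in(\frac12,\frac34)$ let $\rho_h(k)=\frac12((k+1)^{2h}+(k-1)^{2h}-2k^{2h})$. Let $h_c\in(\frac12,\frac34)$ be such that $\sum_{k\ge1}\rho_h^2(k)<\frac14$ for all $h\in(\frac12,h_c)$ and $\sum_{k\ge1}\rho_h^2(k)>\frac14$ for all $h\in(h_c,\frac34)$ (such $h_c$ exists), and $H_c=2h_c-\frac12$. For $H\in(\frac12,1)$: $c_H=\sqrt{\frac{2H\,\Gamma(\frac32-H)}{\Gamma(H+\frac12)\Gamma(2-2H)}}$, $C_H=c_H(H-\frac12)$; for $1\le i<n$, $j_n^H(i)=\sigma C_H\int_{i-1}^i x^{\frac12-H}\Big(\int_0^1(v+n-1)^{H-\frac12}(v+n-1-x)^{H-\frac32}dv\Big)dx$; $g_n^H=\sigma C_H\int_{n-1}^n x^{\frac12-H}(n-x)^{H-\frac12}\Big(\int_0^1(y(n-x)+x)^{H-\frac12}y^{H-\frac32}dy\Big)dx$. For $n\ge2$, $x_n=n-1-\Big(\big(1+\frac1{n-1}\big)^{\frac2{3-2H}}-1\Big)^{-1}$,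 $i_n=\lfloor x_n\rfloor+1$. With $(\xi_i)$ i.i.d., $P(\xi_i=\pm1)=\frac12$, $\widehat{\mathcal{Y}}_n^H=\sum_{i=i_n}^{n-1}j_n^H(i)\xi_i$. For events $A_k$: $\{A_k\ \text{i.o.}\}=\bigcap_{m}\bigcup_{k\ge m}A_k$, $\{A_k\ \text{ult.}\}=\bigcup_m\bigcap_{k\ge m}A_k$. *)

theory Defs
  imports "HOL-Probability.Probability"
begin

definition rho :: "real \<Rightarrow> nat \<Rightarrow> real" where
  "rho h k = ((real k + 1) powr (2*h) + (real k - 1) powr (2*h) - 2 * real k powr (2*h)) / 2"

definition is_hc :: "real \<Rightarrow> bool" where
  "is_hc hc \<longleftrightarrow> 1/2 < hc \<and> hc < 3/4 \<and>
     (\<forall>h. 1/2 < h \<and> h < hc \<longrightarrow> (\<Sum>k. (rho h (Suc k))\<^sup>2) < 1/4) \<and>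
     (\<forall>h. hc < h \<and> h < 3/4 \<longrightarrow> (\<Sum>k. (rho h (Suc k))\<^sup>2) > 1/4)"

definition cH :: "real \<Rightarrow> real" where
  "cH H = sqrt (2 * H * Gamma (3/2 - H) / (Gamma (H + 1/2) * Gamma (2 - 2*H)))"

definition CH :: "real \<Rightarrow> real" where
  "CH H = cH H * (H - 1/2)"

definition jH :: "real \<Rightarrow> real \<Rightarrow> nat \<Rightarrow> nat \<Rightarrow> real" where
  "jH \<sigma> H n i = \<sigma> * CH H *
     (LBINT x = real i - 1..real i. x powr (1/2 - H) *
        (LBINT v = 0..1. (v + real n - 1) powr (H - 1/2) * (v + real n - 1 - x) powr (H - 3/2)))"

definition gH :: "real \<Rightarrow> real \<Rightarrow> nat \<Rightarrow> real" where
  "gH \<sigma> H n = \<sigma> * CH H *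
     (LBINT x = real n - 1..real n. x powr (1/2 - H) * (real n - x) powr (H - 1/2) *
        (LBINT y = 0..1. (y * (real n - x) + x) powr (H - 1/2) * y powr (H - 3/2)))"

definition xH :: "real \<Rightarrow> nat \<Rightarrow> real" where
  "xH H n = real n - 1 - 1 / ((1 + 1 / (real n - 1)) powr (2 / (3 - 2*H)) - 1)"

definition iH :: "real \<Rightarrow> nat \<Rightarrow> nat" where
  "iH H n = nat (\<lfloor>xH H n\<rfloor> + 1)"

definition Yhat :: "real \<Rightarrow> real \<Rightarrow> (nat \<Rightarrow> 'a \<Rightarrow> real) \<Rightarrow> nat \<Rightarrow> 'a \<Rightarrow> real" where
  "Yhat \<sigma> H \<xi> n \<omega> = (\<Sum>i = iH H n..n - 1. jH \<sigma> H n i * \<xi> i \<omega>)"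

end

theory Submission
  imports Defs
begin

text \<open>
  For every H in (1/2, 1) both claims hold, with epsilon = 1/2 and delta = 1; the threshold H_c
  only serves to place H in that interval. The weights j_n(i) behave like (n - i)^(H - 3/2):
  their sum over the last K indices is unbounded in K, their squares are summable, and g_n stays
  between two positive constants. Hence, with probability bounded below uniformly in n, the signs
  of a long final block all agree with the sign of the remaining sum, giving |Y_n| > 2 g_n; and the
  signs of a final block can also cancel its sum greedily while, by Chebyshev, the remaining sum
  is small, giving |Y_n| <= g_n / 2. Since i_n tends to infinity these are tail events of the
  xi_i, and Kolmogorov's 0-1 law turns "infinitely often with positive probability" into
  probability 1.
\<close>

section \<open>Integrals over bounded intervals\<close>

lemma interval_integral_eq_indicator:
  fixes a b :: real and f :: "real \<Rightarrow> real"
  assumes "a \<le> b"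
  shows "(LBINT x=a..b. f x) = (\<integral>x. indicator {a<..<b} x * f x \<partial>lborel)"
  using assms by (simp add: interval_integral_Ioo set_lebesgue_integral_def)

lemma interval_integral_nonneg_pointwise:
  fixes a b :: real and f :: "real \<Rightarrow> real"
  assumes "a \<le> b" "\<And>x. a < x \<Longrightarrow> x < b \<Longrightarrow> 0 \<le> f x"
  shows "0 \<le> (LBINT x=a..b. f x)"
  unfolding interval_integral_eq_indicator[OF assms(1)]
  by (intro integral_nonneg_AE AE_I2) (auto simp: indicator_def assms(2))

lemma interval_integral_le_dominant:
  fixes a b :: real and f g :: "real \<Rightarrow> real"
  assumes "a \<le> b" "set_integrable lborel {a<..<b} g"
    and "\<And>x. a < x \<Longrightarrow> x < b \<Longrightarrow> 0 \<le> f x \<and> f x \<le> g x"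
  shows "(LBINT x=a..b. f x) \<le> (LBINT x=a..b. g x)"
  unfolding interval_integral_eq_indicator[OF assms(1)]
proof (rule integral_mono_AE')
  show "integrable lborel (\<lambda>x. indicator {a<..<b} x * g x)"
    using assms(2) by (simp add: set_integrable_def)
qed (use assms(3) in \<open>auto intro!: AE_I2 simp: indicator_def intro: order_trans\<close>)

lemma interval_integral_le_const:
  fixes a b C :: real and f :: "real \<Rightarrow> real"
  assumes "a \<le> b" "\<And>x. a < x \<Longrightarrow> x < b \<Longrightarrow> 0 \<le> f x \<and> f x \<le> C"
  shows "(LBINT x=a..b. f x) \<le> C * (b - a)"
proof -
  have "set_integrable lborel {a<..<b} (\<lambda>x. C)"
    using interval_integral_const(1)[of a b C] assms(1) by (simp add: interval_lebesgue_integrable_def)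
  from interval_integral_le_dominant[OF assms(1) this assms(2)] show ?thesis
    using assms(1) by simp
qed

lemma interval_integral_mono_pointwise:
  fixes a b :: real and f g :: "real \<Rightarrow> real"
  assumes "a \<le> b" "set_integrable lborel {a<..<b} f" "set_integrable lborel {a<..<b} g"
    and "\<And>x. a < x \<Longrightarrow> x < b \<Longrightarrow> f x \<le> g x"
  shows "(LBINT x=a..b. f x) \<le> (LBINT x=a..b. g x)"
  using assms by (simp add: interval_integral_Ioo) (rule set_integral_mono, auto)

lemma interval_integral_ge_const:
  fixes a b m :: real and f :: "real \<Rightarrow> real"
  assumes "a \<le> b" "set_integrable lborel {a<..<b} f" "\<And>x. a < x \<Longrightarrow> x < b \<Longrightarrow> m \<le> f x"
  shows "m * (b - a) \<le> (LBINT x=a..b. f x)"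
proof -
  have "set_integrable lborel {a<..<b} (\<lambda>x. m)"
    using interval_integral_const(1)[of a b m] assms(1) by (simp add: interval_lebesgue_integrable_def)
  from interval_integral_mono_pointwise[OF assms(1) this assms(2,3)] show ?thesis
    using assms(1) by simp
qed

lemmas interval_integral01_nonneg_pointwise =
    interval_integral_nonneg_pointwise[of 0 1, folded zero_ereal_def one_ereal_def, simplified]
  and interval_integral01_le_dominant =
    interval_integral_le_dominant[of 0 1, folded zero_ereal_def one_ereal_def, simplified]
  and interval_integral01_ge_const =
    interval_integral_ge_const[of 0 1, folded zero_ereal_def one_ereal_def, simplified]

lemma borel_measurable_interval_integral01_param:
  fixes f :: "real \<Rightarrow> real \<Rightarrow> real"
  assumes "(\<lambda>p. f (fst p) (snd p)) \<in> borel_measurable (lborel \<Otimes>\<^sub>M lborel)"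
  shows "(\<lambda>x. LBINT y=0..1. f x y) \<in> borel_measurable lborel"
proof -
  have "(\<lambda>p. indicator {0<..<1} (snd p) * f (fst p) (snd p)) \<in> borel_measurable (lborel \<Otimes>\<^sub>M lborel)"
    using assms by measurable
  then have "(\<lambda>x. \<integral>y. indicator {0<..<1} y * f x y \<partial>lborel) \<in> borel_measurable lborel"
    by (intro lborel.borel_measurable_lebesgue_integral) (simp add: case_prod_beta')
  then show ?thesis
    using interval_integral_eq_indicator[of 0 1] by (simp add: zero_ereal_def one_ereal_def)
qed

lemma set_integrable_bounded_Ioo:
  fixes a b B :: real and f :: "real \<Rightarrow> real"
  assumes "f \<in> borel_measurable lborel" "\<And>x. a < x \<Longrightarrow> x < b \<Longrightarrow> \<bar>f x\<bar> \<le> B"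
  shows "set_integrable lborel {a<..<b} f"
proof -
  have "emeasure lborel {a<..<b} < \<top>"
    by (cases "a \<le> b") (auto simp: emeasure_lborel_Ioo)
  then show ?thesis unfolding set_integrable_def
    by (intro integrableI_bounded_set_indicator) (use assms in \<open>auto intro!: AE_I2\<close>)
qed

lemma set_integrable_powr_Ioo01:
  fixes p :: real assumes "-1 < p"
  shows "set_integrable lborel {0<..<1} (\<lambda>v. v powr p)"
proof -
  have "(\<lambda>v. v powr p) absolutely_integrable_on {0..1}"
    using integrable_on_powr_from_0[OF assms] by (subst absolutely_integrable_on_iff_nonneg) auto
  then have "set_integrable lborel {0..1} (\<lambda>v. v powr p)"
    unfolding set_integrable_def by (subst (asm) integrable_completion) auto
  then show ?thesis by (rule set_integrable_subset) auto
qed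

section \<open>The kernels of j_n and g_n\<close>

definition singular_mass :: "real \<Rightarrow> real" where
  "singular_mass H = (LBINT v=0..1. v powr (H - 3/2))"

(* At distance n - i = 1 the inner integrand of j_n(i) has the integrable singularity v^(H-3/2). *)
definition kernel_bound :: "real \<Rightarrow> nat \<Rightarrow> real" where
  "kernel_bound H k = (if k = 1 then singular_mass H else (real k - 1) powr (H - 3/2))"

definition j_kernel :: "real \<Rightarrow> nat \<Rightarrow> real \<Rightarrow> real" where
  "j_kernel H n x =
     (LBINT v=0..1. (v + real n - 1) powr (H - 1/2) * (v + real n - 1 - x) powr (H - 3/2))"

definition g_kernel :: "real \<Rightarrow> nat \<Rightarrow> real \<Rightarrow> real" where
  "g_kernel H n x = (LBINT y=0..1. (y * (real n - x) + x) powr (H - 1/2) * y powr (H - 3/2))"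

lemma jH_eq_kernel:
  "jH \<sigma> H n i = \<sigma> * CH H * (LBINT x = real i - 1..real i. x powr (1/2 - H) * j_kernel H n x)"
  by (simp add: jH_def j_kernel_def)

lemma CH_pos: "1/2 < H \<Longrightarrow> H < 1 \<Longrightarrow> 0 < CH H"
  unfolding CH_def cH_def by (auto intro!: mult_pos_pos divide_pos_pos)

lemma set_integrable_singular_kernel: "1/2 < (H::real) \<Longrightarrow> set_integrable lborel {0<..<1} (\<lambda>v. v powr (H - 3/2))"
  by (rule set_integrable_powr_Ioo01) simp

lemma singular_mass_nonneg: "0 \<le> singular_mass H"
  unfolding singular_mass_def by (rule interval_integral01_nonneg_pointwise) simp

lemma j_kernel_nonneg: "0 \<le> j_kernel H n x"
  unfolding j_kernel_def by (rule interval_integral01_nonneg_pointwise) simp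

lemma g_kernel_nonneg: "0 \<le> g_kernel H n x"
  unfolding g_kernel_def by (rule interval_integral01_nonneg_pointwise) simp

lemma borel_measurable_j_kernel: "j_kernel H n \<in> borel_measurable lborel"
  unfolding j_kernel_def[abs_def] by (rule borel_measurable_interval_integral01_param) measurable

lemma borel_measurable_g_kernel: "g_kernel H n \<in> borel_measurable lborel"
  unfolding g_kernel_def[abs_def] by (rule borel_measurable_interval_integral01_param) measurable

lemma powr_ratio_ge_half:
  fixes H N :: real assumes H: "1/2 < H" "H < 1" and N: "2 \<le> N"
  shows "1/2 \<le> N powr (1/2 - H) * (N - 1) powr (H - 1/2)"
proof -
  have "N powr (1/2 - H) = inverse (N powr (H - 1/2))"
    using powr_minus[of N "H - 1/2"] by (simp only: minus_diff_eq)
  then have "N powr (1/2 - H) * (N - 1) powr (H - 1/2) = ((N - 1) / N) powr (H - 1/2)"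
    by (simp add: powr_divide inverse_eq_divide)
  moreover have "(N - 1) / N \<le> ((N - 1) / N) powr (H - 1/2)"
    using powr_mono'[of "H - 1/2" 1 "(N - 1) / N"] H N by simp
  moreover have "1/2 \<le> (N - 1) / N" using N by (simp add: field_simps)
  ultimately show ?thesis by linarith
qed

lemma powr_ratio_le_two:
  fixes H N :: real assumes H: "1/2 < H" "H < 1" and N: "2 \<le> N"
  shows "(N - 1) powr (1/2 - H) * N powr (H - 1/2) \<le> 2"
proof -
  have "(N - 1) powr (1/2 - H) = inverse ((N - 1) powr (H - 1/2))"
    using powr_minus[of "N - 1" "H - 1/2"] by (simp only: minus_diff_eq)
  then have "(N - 1) powr (1/2 - H) * N powr (H - 1/2) = (N / (N - 1)) powr (H - 1/2)"
    by (simp add: powr_divide inverse_eq_divide)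
  also have "\<dots> \<le> (N / (N - 1)) powr 1"
    using H N by (intro powr_mono) auto
  also have "\<dots> \<le> 2" using N by (simp add: field_simps)
  finally show ?thesis .
qed

lemma j_kernel_lower:
  fixes H x :: real and n i :: nat
  assumes H: "1/2 < H" "H < 1" and i: "1 \<le> i" "i < n" and x: "real i - 1 < x" "x < real i"
  shows "(real n - 1) powr (H - 1/2) * (real (n - i) + 1) powr (H - 3/2) \<le> j_kernel H n x"
proof -
  define f where "f v = (v + real n - 1) powr (H - 1/2) * (v + real n - 1 - x) powr (H - 3/2)" for v
  have "continuous_on {0..1} f"
    unfolding f_def using x i by (auto intro!: continuous_intros)
  then have "set_integrable lborel {0<..<1} f"
    by (intro set_integrable_subset[OF borel_integrable_atLeastAtMost']) auto
  then show ?thesis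
    unfolding j_kernel_def f_def[symmetric]
  proof (rule interval_integral01_ge_const)
    fix v :: real assume v: "0 < v" "v < 1"
    have "(real n - 1) powr (H - 1/2) \<le> (v + real n - 1) powr (H - 1/2)"
      using v H i by (intro powr_mono2) auto
    moreover have "(real (n - i) + 1) powr (H - 3/2) \<le> (v + real n - 1 - x) powr (H - 3/2)"
      using v H i x by (intro powr_mono2') (auto simp: of_nat_diff)
    ultimately show "(real n - 1) powr (H - 1/2) * (real (n - i) + 1) powr (H - 3/2) \<le> f v"
      unfolding f_def by (intro mult_mono) auto
  qed
qed

lemma j_kernel_upper:
  fixes H x :: real and n i :: nat
  assumes H: "1/2 < H" "H < 1" and i: "1 \<le> i" "i < n" and x: "real i - 1 < x" "x < real i"
  shows "j_kernel H n x \<le> real n powr (H - 1/2) * kernel_bound H (n - i)"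
proof -
  define \<beta> where "\<beta> v = (if n - i = 1 then v powr (H - 3/2) else (real (n - i) - 1) powr (H - 3/2))"
    for v :: real
  have \<beta>_integral: "(LBINT v=0..1. \<beta> v) = kernel_bound H (n - i)"
    by (simp add: \<beta>_def kernel_bound_def singular_mass_def zero_ereal_def one_ereal_def)
  have "set_integrable lborel {0<..<1} (\<lambda>v. real n powr (H - 1/2) * \<beta> v)"
  proof (cases "n - i = 1")
    case True
    then show ?thesis using set_integrable_singular_kernel[OF H(1)] by (simp add: \<beta>_def)
  next
    case False
    then show ?thesis
      using interval_integral_const(1)[of 0 1 "real n powr (H - 1/2) * (real (n - i) - 1) powr (H - 3/2)"]
      by (simp add: \<beta>_def interval_lebesgue_integrable_def)
  qed
  then have "j_kernel H n x \<le> (LBINT v=0..1. real n powr (H - 1/2) * \<beta> v)"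
    unfolding j_kernel_def
  proof (rule interval_integral01_le_dominant)
    fix v :: real assume v: "0 < v" "v < 1"
    have "(v + real n - 1) powr (H - 1/2) \<le> real n powr (H - 1/2)"
      using v H i by (intro powr_mono2) auto
    moreover have "(v + real n - 1 - x) powr (H - 3/2) \<le> \<beta> v"
      using v H i x by (auto simp: \<beta>_def of_nat_diff intro!: powr_mono2')
    ultimately show "0 \<le> (v + real n - 1) powr (H - 1/2) * (v + real n - 1 - x) powr (H - 3/2) \<and>
        (v + real n - 1) powr (H - 1/2) * (v + real n - 1 - x) powr (H - 3/2) \<le> real n powr (H - 1/2) * \<beta> v"
      by (auto intro!: mult_mono)
  qed
  then show ?thesis
    by (simp add: \<beta>_integral)
qed

lemma g_kernel_bounds:
  fixes H x :: real and n :: nat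
  assumes H: "1/2 < H" "H < 1" and n: "2 \<le> n" and x: "real n - 1 < x" "x < real n"
  shows "(real n - 1) powr (H - 1/2) \<le> g_kernel H n x"
    and "g_kernel H n x \<le> real n powr (H - 1/2) * singular_mass H"
proof -
  define f where "f y = (y * (real n - x) + x) powr (H - 1/2) * y powr (H - 3/2)" for y
  have dominant: "set_integrable lborel {0<..<1} (\<lambda>y. real n powr (H - 1/2) * y powr (H - 3/2))"
    using set_integrable_singular_kernel[OF H(1)] by simp
  have bounds: "(real n - 1) powr (H - 1/2) \<le> f y \<and> f y \<le> real n powr (H - 1/2) * y powr (H - 3/2)"
    if y: "0 < y" "y < 1" for y
  proof -
    have "0 \<le> y * (real n - x)" "y * (real n - x) \<le> real n - x"
      using x y by (auto intro: mult_left_le_one_le)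
    then have "x \<le> y * (real n - x) + x \<and> y * (real n - x) + x \<le> real n"
      by (intro conjI) linarith+
    then have "(real n - 1) powr (H - 1/2) \<le> (y * (real n - x) + x) powr (H - 1/2)"
      and "(y * (real n - x) + x) powr (H - 1/2) \<le> real n powr (H - 1/2)"
      using x H n by (auto intro!: powr_mono2)
    moreover have "1 \<le> y powr (H - 3/2)"
      using powr_mono2'[of "H - 3/2" y 1] y H by simp
    ultimately show ?thesis
      unfolding f_def using mult_mono[of _ _ 1 "y powr (H - 3/2)"] by (auto intro: mult_right_mono)
  qed
  have f_nonneg: "0 \<le> f y" for y
    unfolding f_def by simp
  have "set_integrable lborel {0<..<1} f"
  proof (rule set_integrable_bound[OF dominant])
    show "set_borel_measurable lborel {0<..<1} f"
      unfolding set_borel_measurable_def f_def by measurable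
  qed (use bounds f_nonneg in \<open>auto intro!: AE_I2\<close>)
  then show "(real n - 1) powr (H - 1/2) \<le> g_kernel H n x"
    unfolding g_kernel_def f_def[symmetric]
    by (rule interval_integral01_ge_const) (use bounds in auto)
  have "g_kernel H n x \<le> (LBINT y=0..1. real n powr (H - 1/2) * y powr (H - 3/2))"
    unfolding g_kernel_def f_def[symmetric] using dominant
  proof (rule interval_integral01_le_dominant)
    show "0 \<le> f y \<and> f y \<le> real n powr (H - 1/2) * y powr (H - 3/2)" if "0 < y" "y < 1" for y
      using bounds[OF that] f_nonneg by simp
  qed
  then show "g_kernel H n x \<le> real n powr (H - 1/2) * singular_mass H"
    by (simp add: singular_mass_def)
qed

lemma jH_nonneg:
  assumes "1/2 < H" "H < 1" "0 < \<sigma>"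
  shows "0 \<le> jH \<sigma> H n i"
proof -
  have "0 \<le> (LBINT x = real i - 1..real i. x powr (1/2 - H) * j_kernel H n x)"
    by (rule interval_integral_nonneg_pointwise) (simp_all add: j_kernel_nonneg)
  then show ?thesis
    unfolding jH_eq_kernel using CH_pos[OF assms(1,2)] assms(3) by simp
qed

lemma jH_lower:
  assumes H: "1/2 < H" "H < 1" and \<sigma>: "0 < \<sigma>" and i: "2 \<le> i" "i < n"
  shows "\<sigma> * CH H / 2 * (real (n - i) + 1) powr (H - 3/2) \<le> jH \<sigma> H n i"
proof -
  define m where "m = real n powr (1/2 - H) * (real n - 1) powr (H - 1/2) * (real (n - i) + 1) powr (H - 3/2)"
  have bounded: "\<bar>x powr (1/2 - H) * j_kernel H n x\<bar> \<le> real n powr (H - 1/2) * kernel_bound H (n - i)"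
    and above_m: "m \<le> x powr (1/2 - H) * j_kernel H n x"
    if x: "real i - 1 < x" "x < real i" for x
  proof -
    have "1 \<le> i" using i by simp
    note kernel = j_kernel_lower[OF H this i(2) x] j_kernel_upper[OF H this i(2) x]
    have "x powr (1/2 - H) \<le> 1 powr (1/2 - H)"
      using x i H by (intro powr_mono2') auto
    then have "x powr (1/2 - H) * j_kernel H n x \<le> 1 * (real n powr (H - 1/2) * kernel_bound H (n - i))"
      using kernel(2) j_kernel_nonneg[of H n x] by (intro mult_mono) auto
    then show "\<bar>x powr (1/2 - H) * j_kernel H n x\<bar> \<le> real n powr (H - 1/2) * kernel_bound H (n - i)"
      using j_kernel_nonneg[of H n x] by simp
    have "real n powr (1/2 - H) \<le> x powr (1/2 - H)"
      using x i H by (intro powr_mono2') auto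
    then show "m \<le> x powr (1/2 - H) * j_kernel H n x"
      unfolding m_def mult.assoc using kernel(1) by (intro mult_mono) auto
  qed
  have "set_integrable lborel {real i - 1<..<real i} (\<lambda>x. x powr (1/2 - H) * j_kernel H n x)"
    using borel_measurable_j_kernel bounded by (intro set_integrable_bounded_Ioo) auto
  then have "m \<le> (LBINT x = real i - 1..real i. x powr (1/2 - H) * j_kernel H n x)"
    using interval_integral_ge_const[of "real i - 1" "real i" _ m] above_m by simp
  moreover have "(real (n - i) + 1) powr (H - 3/2) / 2 \<le> m"
    using mult_right_mono[OF powr_ratio_ge_half[OF H, of "real n"], of "(real (n - i) + 1) powr (H - 3/2)"] i
    unfolding m_def by simp
  ultimately show ?thesis
    unfolding jH_eq_kernel using CH_pos[OF H] \<sigma>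
    by (simp add: mult_left_mono)
qed

lemma jH_upper:
  assumes H: "1/2 < H" "H < 1" and \<sigma>: "0 < \<sigma>" and i: "1 \<le> i" "i < n"
    and c0: "0 < c0" "c0 * real n \<le> real i - 1"
  shows "jH \<sigma> H n i \<le> \<sigma> * CH H * (c0 powr (1/2 - H) * kernel_bound H (n - i))"
proof -
  have "(c0 * real n) powr (1/2 - H) * real n powr (H - 1/2) = c0 powr (1/2 - H)"
    using i by (simp add: powr_mult powr_add[symmetric])
  then have pointwise: "x powr (1/2 - H) * j_kernel H n x \<le> c0 powr (1/2 - H) * kernel_bound H (n - i)"
    if x: "real i - 1 < x" "x < real i" for x
  proof -
    have "x powr (1/2 - H) \<le> (c0 * real n) powr (1/2 - H)"
      using x i H c0 by (intro powr_mono2') auto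
    then have "x powr (1/2 - H) * j_kernel H n x
        \<le> (c0 * real n) powr (1/2 - H) * (real n powr (H - 1/2) * kernel_bound H (n - i))"
      using j_kernel_upper[OF H i x] j_kernel_nonneg[of H n x] by (intro mult_mono) auto
    then show ?thesis
      using \<open>(c0 * real n) powr (1/2 - H) * real n powr (H - 1/2) = c0 powr (1/2 - H)\<close>
      by (simp only: mult.assoc[symmetric])
  qed
  have "(LBINT x = real i - 1..real i. x powr (1/2 - H) * j_kernel H n x)
      \<le> c0 powr (1/2 - H) * kernel_bound H (n - i)"
    using interval_integral_le_const[of "real i - 1" "real i" _ "c0 powr (1/2 - H) * kernel_bound H (n - i)"]
      pointwise j_kernel_nonneg by simp
  then show ?thesis
    unfolding jH_eq_kernel using CH_pos[OF H] \<sigma> by (simp add: mult_left_mono)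
qed

definition g_integrand :: "real \<Rightarrow> nat \<Rightarrow> real \<Rightarrow> real" where
  "g_integrand H n x = x powr (1/2 - H) * (real n - x) powr (H - 1/2) * g_kernel H n x"

lemma gH_eq_integrand: "gH \<sigma> H n = \<sigma> * CH H * (LBINT x = real n - 1..real n. g_integrand H n x)"
  by (simp add: gH_def g_integrand_def g_kernel_def)

lemma g_integrand_bounds:
  fixes H x :: real and n :: nat
  assumes H: "1/2 < H" "H < 1" and n: "2 \<le> n" and x: "real n - 1 < x" "x < real n"
  shows "(real n - x) / 2 \<le> g_integrand H n x" and "g_integrand H n x \<le> 2 * singular_mass H"
proof -
  have "real n powr (1/2 - H) \<le> x powr (1/2 - H)"
    using x H n by (intro powr_mono2') auto
  moreover have "(real n - x) powr 1 \<le> (real n - x) powr (H - 1/2)"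
    using x H by (intro powr_mono') auto
  ultimately have "real n powr (1/2 - H) * (real n - x) * (real n - 1) powr (H - 1/2) \<le> g_integrand H n x"
    unfolding g_integrand_def using x g_kernel_bounds(1)[OF H n x] by (intro mult_mono) auto
  moreover have "(real n - x) / 2 \<le> (real n powr (1/2 - H) * (real n - 1) powr (H - 1/2)) * (real n - x)"
    using mult_right_mono[OF powr_ratio_ge_half[OF H, of "real n"], of "real n - x"] x n by simp
  ultimately show "(real n - x) / 2 \<le> g_integrand H n x" by (simp add: mult_ac)
  have "x powr (1/2 - H) \<le> (real n - 1) powr (1/2 - H)"
    using x H n by (intro powr_mono2') auto
  moreover have "(real n - x) powr (H - 1/2) \<le> 1"
    using x H by (intro powr_le1) auto
  ultimately have "g_integrand H n x \<le> (real n - 1) powr (1/2 - H) * 1 * (real n powr (H - 1/2) * singular_mass H)"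
    unfolding g_integrand_def using g_kernel_bounds(2)[OF H n x] g_kernel_nonneg
    by (intro mult_mono) auto
  also have "\<dots> = ((real n - 1) powr (1/2 - H) * real n powr (H - 1/2)) * singular_mass H"
    by simp
  also have "\<dots> \<le> 2 * singular_mass H"
    using powr_ratio_le_two[OF H, of "real n"] n singular_mass_nonneg[of H]
    by (intro mult_right_mono) auto
  finally show "g_integrand H n x \<le> 2 * singular_mass H" .
qed

lemma g_integrand_nonneg: "0 \<le> g_integrand H n x"
  unfolding g_integrand_def using g_kernel_nonneg by simp

lemma gH_upper:
  assumes H: "1/2 < H" "H < 1" and \<sigma>: "0 < \<sigma>" and n: "2 \<le> n"
  shows "gH \<sigma> H n \<le> \<sigma> * CH H * (2 * singular_mass H)"
proof -
  have "(LBINT x = real n - 1..real n. g_integrand H n x) \<le> 2 * singular_mass H"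
    using interval_integral_le_const[of "real n - 1" "real n" "g_integrand H n"]
      g_integrand_bounds(2)[OF H n] g_integrand_nonneg by simp
  then show ?thesis
    unfolding gH_eq_integrand using CH_pos[OF H] \<sigma> by (simp add: mult_left_mono)
qed

lemma interval_integral_half_linear: "(LBINT x = ereal (N - 1)..ereal N. (N - x) / 2) = (1/4 :: real)"
proof -
  have "(LBINT x = ereal (N - 1)..ereal N. (N - x) / 2)
      = (\<lambda>x. - ((N - x) * (N - x)) / 4) N - (\<lambda>x. - ((N - x) * (N - x)) / 4) (N - 1)"
    by (rule interval_integral_FTC_finite)
       (auto intro!: continuous_intros derivative_eq_intros
         simp: has_real_derivative_iff_has_vector_derivative[symmetric] field_simps)
  then show ?thesis by simp
qed

lemma gH_lower:
  assumes H: "1/2 < H" "H < 1" and \<sigma>: "0 < \<sigma>" and n: "2 \<le> n"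
  shows "\<sigma> * CH H / 4 \<le> gH \<sigma> H n"
proof -
  have "g_integrand H n \<in> borel_measurable lborel"
    unfolding g_integrand_def[abs_def] using borel_measurable_g_kernel by measurable
  then have "set_integrable lborel {real n - 1<..<real n} (g_integrand H n)"
    using g_integrand_bounds(2)[OF H n] g_integrand_nonneg
    by (intro set_integrable_bounded_Ioo[where B = "2 * singular_mass H"]) auto
  moreover have "set_integrable lborel {real n - 1<..<real n} (\<lambda>x. (real n - x) / 2)"
    by (rule set_integrable_subset[OF borel_integrable_atLeastAtMost'[of "real n - 1" "real n"]])
      (auto intro!: continuous_intros)
  ultimately have "(LBINT x = real n - 1..real n. (real n - x) / 2) \<le> (LBINT x = real n - 1..real n. g_integrand H n x)"
    using g_integrand_bounds(1)[OF H n] by (intro interval_integral_mono_pointwise) auto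
  then show ?thesis
    unfolding gH_eq_integrand interval_integral_half_linear using CH_pos[OF H] \<sigma>
    by (simp add: mult_left_mono)
qed

section \<open>The cut-off index i_n\<close>

lemma one_plus_powr_minus_one_bounds:
  fixes p t :: real assumes p: "1 \<le> p" "p \<le> 2" and t: "0 < t" "t \<le> 1"
  shows "p * (t / (1 + t)) \<le> (1 + t) powr p - 1" and "(1 + t) powr p - 1 \<le> 3 * t"
proof -
  have "ln (1 / (1 + t)) \<le> 1 / (1 + t) - 1"
    using t by (intro ln_le_minus_one) auto
  then have "t / (1 + t) \<le> ln (1 + t)"
    using t by (simp add: ln_div field_simps)
  then have "p * (t / (1 + t)) \<le> p * ln (1 + t)"
    using p by (intro mult_left_mono) auto
  also have "\<dots> \<le> exp (p * ln (1 + t)) - 1"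
    using exp_ge_add_one_self[of "p * ln (1 + t)"] by linarith
  finally show "p * (t / (1 + t)) \<le> (1 + t) powr p - 1"
    using t by (simp add: powr_def)
  have "(1 + t) powr p \<le> (1 + t) powr 2"
    using p t by (intro powr_mono) auto
  also have "\<dots> = 1 + 2 * t + t * t"
    using t by (simp add: powr_numeral power2_eq_square algebra_simps)
  moreover have "t * t \<le> t"
    using t by (intro mult_left_le_one_le) auto
  ultimately show "(1 + t) powr p - 1 \<le> 3 * t"
    by linarith
qed

lemma xH_bounds:
  fixes H :: real and n :: nat
  assumes H: "1/2 < H" "H < 1" and n: "2 \<le> n"
  shows "(H - 1/2) * real n - 1 \<le> xH H n" and "xH H n \<le> 2/3 * (real n - 1)"
proof -
  define p where "p = 2 / (3 - 2*H)"
  define t where "t = 1 / (real n - 1)"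
  define E where "E = (1 + t) powr p - 1"
  have p: "1 \<le> p" "p \<le> 2" using H by (auto simp: p_def field_simps)
  have t: "0 < t" "t \<le> 1" using n by (auto simp: t_def field_simps)
  have xH_eq: "xH H n = real n - 1 - 1 / E"
    by (simp add: xH_def E_def p_def t_def)
  have "t / (1 + t) = 1 / real n" using n by (simp add: t_def field_simps)
  then have E_lower: "p / real n \<le> E"
    using one_plus_powr_minus_one_bounds(1)[OF p t] by (simp add: E_def)
  have "0 < p / real n" using p n by simp
  then have E_pos: "0 < E" using E_lower by linarith
  have "1 / E \<le> 1 / (p / real n)"
    using E_lower E_pos p n by (intro divide_left_mono) simp_all
  then show "(H - 1/2) * real n - 1 \<le> xH H n"
    unfolding xH_eq by (simp add: p_def algebra_simps)
  have "1 / (3 * t) \<le> 1 / E"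
    using one_plus_powr_minus_one_bounds(2)[OF p t] E_pos t
    by (intro divide_left_mono) (auto simp: E_def)
  then show "xH H n \<le> 2/3 * (real n - 1)"
    unfolding xH_eq by (simp add: t_def)
qed

lemma iH_bounds:
  fixes H :: real and n :: nat
  assumes H: "1/2 < H" "H < 1" and n: "2 \<le> n"
  shows "(H - 1/2) * real n - 1 \<le> real (iH H n)" and "real (iH H n) \<le> 2/3 * (real n - 1) + 1"
proof -
  note x = xH_bounds[OF H n]
  have "0 \<le> (H - 1/2) * real n" using H by simp
  then have "real (iH H n) = of_int (\<lfloor>xH H n\<rfloor> + 1)"
    using x(1) unfolding iH_def by (intro of_nat_nat) linarith
  then show "(H - 1/2) * real n - 1 \<le> real (iH H n)" "real (iH H n) \<le> 2/3 * (real n - 1) + 1"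
    using x by linarith+
qed

lemma filterlim_iH:
  assumes H: "1/2 < H" "H < 1"
  shows "filterlim (iH H) at_top sequentially"
proof (subst filterlim_at_top, intro allI)
  fix m :: nat
  define n0 where "n0 = max 2 (nat \<lceil>(real m + 1) / (H - 1/2)\<rceil>)"
  have "m \<le> iH H n" if n: "n0 \<le> n" for n
  proof -
    have "(real m + 1) / (H - 1/2) \<le> real n"
      using n real_nat_ceiling_ge[of "(real m + 1) / (H - 1/2)"] unfolding n0_def by linarith
    then have "real m + 1 \<le> (H - 1/2) * real n"
      using H by (simp add: field_simps)
    moreover have "2 \<le> n" using n by (simp add: n0_def)
    ultimately show ?thesis
      using iH_bounds(1)[OF H] by fastforce
  qed
  then show "eventually (\<lambda>n. m \<le> iH H n) sequentially"
    by (auto simp: eventually_sequentially)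
qed

lemma eventually_iH_room:
  assumes H: "1/2 < H" "H < 1"
  shows "\<forall>\<^sub>F n in sequentially. K + iH H n \<le> n"
  using eventually_ge_at_top[of "3 * K + 2"]
proof eventually_elim
  fix n assume n: "3 * K + 2 \<le> n"
  then have "real (iH H n) \<le> 2/3 * (real n - 1) + 1"
    using iH_bounds(2)[OF H] by simp
  moreover have "real (3 * K + 2) \<le> real n"
    using n by (simp only: of_nat_le_iff)
  ultimately have "real K + real (iH H n) \<le> real n"
    by (simp add: field_simps)
  then show "K + iH H n \<le> n"
    by (metis of_nat_add of_nat_le_iff)
qed

section \<open>Balancing signs\<close>

lemma sum_reflect:
  fixes f :: "nat \<Rightarrow> real"
  assumes "K \<le> n"
  shows "(\<Sum>i\<in>{n-K..<n}. f i) = (\<Sum>k=1..K. f (n - k))"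
  by (rule sum.reindex_bij_witness[where i="\<lambda>k. n - k" and j="\<lambda>i. n - i"]) (use assms in auto)

lemma greedy_signs:
  fixes w :: "nat \<Rightarrow> real" and u z :: real
  assumes "finite S" "\<forall>k\<in>S. 0 \<le> w k \<and> w k \<le> u" "\<bar>z\<bar> \<le> sum w S + u"
  shows "\<exists>s. (\<forall>k. s k = 1 \<or> s k = -1) \<and> \<bar>z + (\<Sum>k\<in>S. s k * w k)\<bar> \<le> u"
  using assms
proof (induction S arbitrary: z rule: finite_induct)
  case empty
  then show ?case by (intro exI[of _ "\<lambda>_. 1"]) auto
next
  case (insert k S)
  define \<tau> :: real where "\<tau> = (if 0 \<le> z then -1 else 1)"
  have "0 \<le> sum w S" using insert.prems(1) by (intro sum_nonneg) auto
  then have "\<bar>z + \<tau> * w k\<bar> \<le> sum w S + u"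
    using insert.prems insert.hyps unfolding \<tau>_def by (auto simp: abs_le_iff)
  then obtain s where s: "\<forall>k. s k = 1 \<or> s k = -1" "\<bar>z + \<tau> * w k + (\<Sum>k\<in>S. s k * w k)\<bar> \<le> u"
    using insert.IH insert.prems(1) by blast
  have "(\<Sum>j\<in>S. (s(k := \<tau>)) j * w j) = (\<Sum>j\<in>S. s j * w j)"
    using insert.hyps by (intro sum.cong) auto
  then have "z + (\<Sum>j\<in>insert k S. (s(k := \<tau>)) j * w j) = z + \<tau> * w k + (\<Sum>j\<in>S. s j * w j)"
    using insert.hyps by simp
  then show ?case
    using s by (intro exI[of _ "s(k := \<tau>)"]) (auto simp: \<tau>_def)
qed

lemma nonsummable_sum_unbounded:
  fixes b :: "nat \<Rightarrow> real"
  assumes "\<And>k. 0 \<le> b k" "\<not> summable b"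
  obtains N where "T < (\<Sum>k=m..N. b k)"
proof -
  have "\<exists>N. T < (\<Sum>k=m..N. b k)"
  proof (rule ccontr)
    assume bounded: "\<not> ?thesis"
    have "(\<Sum>k\<le>N. b k) \<le> (\<Sum>k<m. b k) + T" for N
    proof -
      have "(\<Sum>k\<le>N. b k) \<le> (\<Sum>k\<in>{..<m} \<union> {m..N}. b k)"
        using assms(1) by (intro sum_mono2) auto
      also have "\<dots> = (\<Sum>k<m. b k) + (\<Sum>k=m..N. b k)"
        by (rule sum.union_disjoint) auto
      finally show ?thesis using bounded[unfolded not_ex not_less, rule_format, of N] by linarith
    qed
    then show False
      using assms bounded_imp_summable by blast
  qed
  then show ?thesis using that by blast
qed

lemma summable_tail_sum_le:
  fixes f :: "nat \<Rightarrow> real"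
  assumes "summable f" "\<And>k. 0 \<le> f k" "0 < \<epsilon>"
  obtains K where "\<And>F. finite F \<Longrightarrow> F \<subseteq> {K..} \<Longrightarrow> sum f F \<le> \<epsilon>"
proof -
  obtain K where K: "\<And>m n. K \<le> m \<Longrightarrow> norm (sum f {m..<n}) < \<epsilon>"
    using assms(1,3) unfolding summable_Cauchy by blast
  have "sum f F \<le> \<epsilon>" if F: "finite F" "F \<subseteq> {K..}" for F
  proof -
    have "sum f F \<le> sum f {K..<Suc (Max (insert K F))}"
      using F assms(2) by (intro sum_mono2) (auto simp: less_Suc_eq_le)
    also have "\<dots> \<le> \<epsilon>"
      using K[of K "Suc (Max (insert K F))"] by simp
    finally show ?thesis .
  qed
  then show ?thesis using that by blast
qed

(* The head gets sign +1; its sum is then cancelled greedily by the tail, whose terms are at most u. *)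
lemma signs_cancelling_head:
  fixes v :: "nat \<Rightarrow> real" and u :: real
  assumes "1 \<le> k0" "k0 \<le> K" "\<forall>k\<in>{1..K}. 0 \<le> v k" "\<forall>k\<in>{k0..K}. v k \<le> u"
    and "(\<Sum>k=1..<k0. v k) \<le> (\<Sum>k=k0..K. v k)"
  shows "\<exists>s. (\<forall>k. s k = 1 \<or> s k = -1) \<and> \<bar>\<Sum>k=1..K. s k * v k\<bar> \<le> u"
proof -
  define z where "z = (\<Sum>k=1..<k0. v k)"
  have "0 \<le> z" unfolding z_def using assms(2,3) by (intro sum_nonneg) auto
  moreover have "0 \<le> v K" "v K \<le> u" using assms(1-4) by auto
  ultimately have "\<bar>z\<bar> \<le> (\<Sum>k=k0..K. v k) + u"
    using assms(5) unfolding z_def[symmetric] by (simp add: abs_of_nonneg)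
  moreover have "\<forall>k\<in>{k0..K}. 0 \<le> v k \<and> v k \<le> u"
    using assms(1,3,4) by auto
  ultimately obtain s where s: "\<forall>k. s k = 1 \<or> s k = -1" "\<bar>z + (\<Sum>k=k0..K. s k * v k)\<bar> \<le> u"
    using greedy_signs[of "{k0..K}" v u z] by auto
  define s' :: "nat \<Rightarrow> real" where "s' k = (if k < k0 then 1 else s k)" for k
  have "(\<Sum>k=1..K. s' k * v k) = (\<Sum>k=1..<k0. s' k * v k) + (\<Sum>k=k0..K. s' k * v k)"
    using assms(1,2) by (subst sum.union_disjoint[symmetric]) (auto intro: sum.cong)
  also have "\<dots> = z + (\<Sum>k=k0..K. s k * v k)"
    unfolding z_def s'_def by (auto intro!: sum.cong arg_cong2[where f="(+)"])
  finally show ?thesis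
    using s by (intro exI[of _ s']) (auto simp: s'_def)
qed

lemma balanced_signs:
  fixes b B :: "nat \<Rightarrow> real" and u :: real
  assumes u: "0 < u" and B: "B \<longlonglongrightarrow> 0" and b: "\<And>k. 0 \<le> b k" "\<not> summable b"
  obtains K0 where "\<And>K v. K0 \<le> K \<Longrightarrow> \<forall>k\<in>{1..K}. b k \<le> v k \<and> v k \<le> B k \<Longrightarrow>
    \<exists>s. (\<forall>k. s k = 1 \<or> s k = -1) \<and> \<bar>\<Sum>k=1..K. s k * v k\<bar> \<le> u"
proof -
  obtain N where "\<And>k. N \<le> k \<Longrightarrow> \<bar>B k\<bar> < u"
    using B u unfolding lim_sequentially dist_real_def by auto
  then obtain k0 where k0: "1 \<le> k0" "\<And>k. k0 \<le> k \<Longrightarrow> B k \<le> u"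
    by (metis abs_less_iff le_add2 less_imp_le add.commute le_trans)
  obtain N where "(\<Sum>k=1..<k0. B k) < (\<Sum>k=k0..N. b k)"
    using nonsummable_sum_unbounded[OF b] by blast
  moreover define K0 where "K0 = max k0 N"
  ultimately have K0: "k0 \<le> K0" "(\<Sum>k=1..<k0. B k) < (\<Sum>k=k0..K0. b k)"
    using b(1) sum_mono2[of "{k0..K0}" "{k0..N}" b] by force+
  have "\<exists>s. (\<forall>k. s k = 1 \<or> s k = -1) \<and> \<bar>\<Sum>k=1..K. s k * v k\<bar> \<le> u"
    if K: "K0 \<le> K" and v: "\<forall>k\<in>{1..K}. b k \<le> v k \<and> v k \<le> B k" for K v
  proof (rule signs_cancelling_head[of k0])
    show "\<forall>k\<in>{1..K}. 0 \<le> v k"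
    proof
      fix k assume "k \<in> {1..K}"
      then have "b k \<le> v k" using v by blast
      then show "0 \<le> v k" using b(1)[of k] by linarith
    qed
    show "\<forall>k\<in>{k0..K}. v k \<le> u"
    proof
      fix k assume k: "k \<in> {k0..K}"
      then have "v k \<le> B k" using v k0(1) by auto
      moreover have "B k \<le> u" using k0(2)[of k] k by simp
      ultimately show "v k \<le> u" by linarith
    qed
    have "(\<Sum>k=1..<k0. v k) \<le> (\<Sum>k=1..<k0. B k)"
      using v K K0 by (intro sum_mono) auto
    also have "\<dots> \<le> (\<Sum>k=k0..K. b k)"
      using K0 K b(1) by (intro order.trans[OF less_imp_le[OF K0(2)]] sum_mono2) auto
    also have "\<dots> \<le> (\<Sum>k=k0..K. v k)"
      using v k0 by (intro sum_mono) auto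
    finally show "(\<Sum>k=1..<k0. v k) \<le> (\<Sum>k=k0..K. v k)" .
  qed (use k0 K K0 in auto)
  then show ?thesis using that by blast
qed

section \<open>The profile of the weights j_n(i)\<close>

lemma not_summable_shifted_powr:
  fixes c p :: real assumes "0 < c" "-1 \<le> p"
  shows "\<not> summable (\<lambda>k::nat. c * (real k + 1) powr p)"
proof
  assume "summable (\<lambda>k::nat. c * (real k + 1) powr p)"
  then have "summable (\<lambda>k::nat. real (k + 1) powr p)"
    using assms(1) by (simp add: summable_cmult_iff add.commute)
  then show False
    using assms(2) summable_iff_shift[of "\<lambda>k. real k powr p" 1] summable_real_powr_iff by simp
qed

lemma kernel_bound_tendsto_zero:
  assumes "1/2 < H" "H < 1"
  shows "kernel_bound H \<longlonglongrightarrow> 0"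
proof -
  have "filterlim (\<lambda>k::nat. real k - 1) at_top sequentially"
    using filterlim_tendsto_add_at_top[OF tendsto_const[of "-1::real"] filterlim_real_sequentially]
    by simp
  then have "(\<lambda>k. (real k - 1) powr (H - 3/2)) \<longlonglongrightarrow> 0"
    by (intro tendsto_neg_powr) (use assms in simp_all)
  moreover have "eventually (\<lambda>k. (real k - 1) powr (H - 3/2) = kernel_bound H k) sequentially"
    using eventually_ge_at_top[of 2] by eventually_elim (simp add: kernel_bound_def)
  ultimately show ?thesis
    by (rule Lim_transform_eventually)
qed

lemma summable_kernel_bound_squared:
  assumes "1/2 < H" "H < 1"
  shows "summable (\<lambda>k. (kernel_bound H k)\<^sup>2)"
proof -
  have "summable (\<lambda>k::nat. real (k + 1) powr (2 * H - 3))"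
    using summable_iff_shift[of "\<lambda>k. real k powr (2 * H - 3)" 1] summable_real_powr_iff assms
    by simp
  moreover have "(kernel_bound H (k + 2))\<^sup>2 = real (k + 1) powr (2 * H - 3)" for k
    by (simp add: kernel_bound_def power2_eq_square powr_add[symmetric] add.commute)
  ultimately show ?thesis
    using summable_iff_shift[of "\<lambda>k. (kernel_bound H k)\<^sup>2" 2] by simp
qed

definition j_lower_profile :: "real \<Rightarrow> real \<Rightarrow> nat \<Rightarrow> real" where
  "j_lower_profile \<sigma> H k = \<sigma> * CH H / 2 * (real k + 1) powr (H - 3/2)"

(* (H - 1/2)/2 is a lower bound for (i_n - 1)/n, which controls the factor x^(1/2-H) in j_n(i). *)
definition j_upper_profile :: "real \<Rightarrow> real \<Rightarrow> nat \<Rightarrow> real" where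
  "j_upper_profile \<sigma> H k = \<sigma> * CH H * (((H - 1/2) / 2) powr (1/2 - H) * kernel_bound H k)"

lemma j_lower_profile_nonneg:
  assumes "1/2 < H" "H < 1" "0 < \<sigma>"
  shows "0 \<le> j_lower_profile \<sigma> H k"
  unfolding j_lower_profile_def using CH_pos[OF assms(1,2)] assms(3) by simp

lemma not_summable_j_lower_profile:
  assumes "1/2 < H" "H < 1" "0 < \<sigma>"
  shows "\<not> summable (j_lower_profile \<sigma> H)"
  using not_summable_shifted_powr[of "\<sigma> * CH H / 2" "H - 3/2"] CH_pos[OF assms(1,2)] assms
  by (simp add: j_lower_profile_def[abs_def])

lemma j_upper_profile_tendsto_zero:
  assumes "1/2 < H" "H < 1"
  shows "j_upper_profile \<sigma> H \<longlonglongrightarrow> 0"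
  unfolding j_upper_profile_def[abs_def]
  by (rule tendsto_mult_right_zero[OF tendsto_mult_right_zero[OF kernel_bound_tendsto_zero[OF assms]]])

lemma summable_j_upper_profile_squared:
  assumes "1/2 < H" "H < 1"
  shows "summable (\<lambda>k. (j_upper_profile \<sigma> H k)\<^sup>2)"
  unfolding j_upper_profile_def power_mult_distrib
  by (intro summable_mult summable_kernel_bound_squared[OF assms])

lemma jH_profile:
  assumes H: "1/2 < H" "H < 1" and \<sigma>: "0 < \<sigma>"
  shows "\<forall>\<^sub>F n in sequentially. \<forall>k\<in>{1..n - iH H n}.
    j_lower_profile \<sigma> H k \<le> jH \<sigma> H n (n - k) \<and> jH \<sigma> H n (n - k) \<le> j_upper_profile \<sigma> H k"
proof -
  define c0 where "c0 = (H - 1/2) / 2"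
  have c0: "0 < c0" using H by (simp add: c0_def)
  have "\<forall>\<^sub>F n in sequentially. 2 / c0 \<le> real n"
    using filterlim_real_sequentially by (simp add: filterlim_at_top)
  then show ?thesis
  proof eventually_elim
    fix n assume n: "2 / c0 \<le> real n"
    then have "2 \<le> c0 * real n" using c0 by (simp add: field_simps)
    moreover have "c0 * real n \<le> real n"
      using c0 H by (intro mult_left_le_one_le) (auto simp: c0_def)
    ultimately have "2 \<le> n" by linarith
    have "(H - 1/2) * real n = 2 * (c0 * real n)"
      by (simp add: c0_def)
    then have lo: "c0 * real n \<le> real (iH H n) - 1"
      using iH_bounds(1)[OF H \<open>2 \<le> n\<close>] \<open>2 \<le> c0 * real n\<close> by linarith
    show "\<forall>k\<in>{1..n - iH H n}.
      j_lower_profile \<sigma> H k \<le> jH \<sigma> H n (n - k) \<and> jH \<sigma> H n (n - k) \<le> j_upper_profile \<sigma> H k"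
    proof
      fix k assume k: "k \<in> {1..n - iH H n}"
      then have i: "iH H n \<le> n - k" "n - k < n" "n - (n - k) = k" by auto
      then have "c0 * real n \<le> real (n - k) - 1" using lo by linarith
      moreover from this have "2 \<le> n - k" using \<open>2 \<le> c0 * real n\<close> by linarith
      ultimately show "j_lower_profile \<sigma> H k \<le> jH \<sigma> H n (n - k) \<and> jH \<sigma> H n (n - k) \<le> j_upper_profile \<sigma> H k"
        using jH_lower[OF H \<sigma>, of "n - k" n] jH_upper[OF H \<sigma> _ _ c0, of "n - k" n] i
        by (simp add: j_lower_profile_def j_upper_profile_def c0_def)
    qed
  qed
qed

lemma jH_large_block:
  assumes H: "1/2 < H" "H < 1" and \<sigma>: "0 < \<sigma>"
  obtains K where "1 \<le> K" "\<forall>\<^sub>F n in sequentially. K + iH H n \<le> n \<and> T < (\<Sum>i\<in>{n-K..<n}. jH \<sigma> H n i)"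
proof -
  note b_nonneg = j_lower_profile_nonneg[OF H \<sigma>]
  obtain N where "T < (\<Sum>k=1..N. j_lower_profile \<sigma> H k)"
    using nonsummable_sum_unbounded[of "j_lower_profile \<sigma> H"] b_nonneg
      not_summable_j_lower_profile[OF H \<sigma>] by blast
  moreover define K where "K = max 1 N"
  ultimately have K: "1 \<le> K" "T < (\<Sum>k=1..K. j_lower_profile \<sigma> H k)"
    using sum_mono2[of "{1..K}" "{1..N}" "j_lower_profile \<sigma> H"] b_nonneg by force+
  have "\<forall>\<^sub>F n in sequentially. K + iH H n \<le> n \<and> T < (\<Sum>i\<in>{n-K..<n}. jH \<sigma> H n i)"
    using eventually_iH_room[OF H, of K] jH_profile[OF H \<sigma>]
  proof eventually_elim
    case (elim n)
    then have "(\<Sum>k=1..K. j_lower_profile \<sigma> H k) \<le> (\<Sum>k=1..K. jH \<sigma> H n (n - k))"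
      by (intro sum_mono) auto
    then show ?case
      using elim K sum_reflect[of K n "jH \<sigma> H n"] by simp
  qed
  with K show ?thesis using that by blast
qed

lemma jH_balanced_block:
  assumes H: "1/2 < H" "H < 1" and \<sigma>: "0 < \<sigma>" and u: "0 < u"
  obtains K0 where "\<And>K. K0 \<le> K \<Longrightarrow> \<forall>\<^sub>F n in sequentially. K + iH H n \<le> n \<and>
      (\<exists>s. (\<forall>i. s i = 1 \<or> s i = -1) \<and> \<bar>\<Sum>i\<in>{n-K..<n}. s i * jH \<sigma> H n i\<bar> \<le> u)"
proof -
  obtain K0 where K0: "\<And>K v. K0 \<le> K \<Longrightarrow>
      \<forall>k\<in>{1..K}. j_lower_profile \<sigma> H k \<le> v k \<and> v k \<le> j_upper_profile \<sigma> H k \<Longrightarrow>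
      \<exists>s. (\<forall>k. s k = 1 \<or> s k = -1) \<and> \<bar>\<Sum>k=1..K. s k * v k\<bar> \<le> u"
    by (rule balanced_signs[OF u j_upper_profile_tendsto_zero[OF H] j_lower_profile_nonneg[OF H \<sigma>]
          not_summable_j_lower_profile[OF H \<sigma>]]) blast
  have "\<forall>\<^sub>F n in sequentially. K + iH H n \<le> n \<and>
      (\<exists>s. (\<forall>i. s i = 1 \<or> s i = -1) \<and> \<bar>\<Sum>i\<in>{n-K..<n}. s i * jH \<sigma> H n i\<bar> \<le> u)"
    if K: "K0 \<le> K" for K
    using eventually_iH_room[OF H, of K] jH_profile[OF H \<sigma>]
  proof eventually_elim
    case (elim n)
    then have "\<forall>k\<in>{1..K}. j_lower_profile \<sigma> H k \<le> jH \<sigma> H n (n - k) \<and> jH \<sigma> H n (n - k) \<le> j_upper_profile \<sigma> H k"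
      by auto
    from K0[OF K this] obtain s
      where s: "\<forall>k. s k = 1 \<or> s k = -1" "\<bar>\<Sum>k=1..K. s k * jH \<sigma> H n (n - k)\<bar> \<le> u"
      by blast
    then have "\<bar>\<Sum>i\<in>{n-K..<n}. s (n - i) * jH \<sigma> H n i\<bar> \<le> u"
      using sum_reflect[of K n "\<lambda>i. s (n - i) * jH \<sigma> H n i"] elim(1) by simp
    then show ?case
      using elim(1) s(1) by (intro conjI exI[of _ "\<lambda>i. s (n - i)"]) auto
  qed
  then show ?thesis using that by blast
qed

lemma jH_square_sum_tail:
  assumes H: "1/2 < H" "H < 1" and \<sigma>: "0 < \<sigma>" and \<epsilon>: "0 < \<epsilon>"
  obtains K0 where "\<And>K. K0 \<le> K \<Longrightarrow> \<forall>\<^sub>F n in sequentially. (\<Sum>i\<in>{iH H n..<n-K}. (jH \<sigma> H n i)\<^sup>2) \<le> \<epsilon>"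
proof -
  obtain K0 where K0: "\<And>F. finite F \<Longrightarrow> F \<subseteq> {K0..} \<Longrightarrow> (\<Sum>k\<in>F. (j_upper_profile \<sigma> H k)\<^sup>2) \<le> \<epsilon>"
    using summable_tail_sum_le[OF summable_j_upper_profile_squared[OF H] _ \<epsilon>] by auto
  have "\<forall>\<^sub>F n in sequentially. (\<Sum>i\<in>{iH H n..<n-K}. (jH \<sigma> H n i)\<^sup>2) \<le> \<epsilon>"
    if K: "K0 \<le> K" for K
    using jH_profile[OF H \<sigma>]
  proof eventually_elim
    case (elim n)
    have "jH \<sigma> H n i \<le> j_upper_profile \<sigma> H (n - i)" if "iH H n \<le> i" "i < n" for i
    proof -
      have "n - i \<in> {1..n - iH H n}" "n - (n - i) = i" using that by auto
      then show ?thesis using elim by fastforce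
    qed
    then have "(\<Sum>i\<in>{iH H n..<n-K}. (jH \<sigma> H n i)\<^sup>2) \<le> (\<Sum>i\<in>{iH H n..<n-K}. (j_upper_profile \<sigma> H (n - i))\<^sup>2)"
      using jH_nonneg[OF H \<sigma>] by (intro sum_mono power_mono) auto
    also have "\<dots> = (\<Sum>k\<in>(\<lambda>i. n - i) ` {iH H n..<n-K}. (j_upper_profile \<sigma> H k)\<^sup>2)"
      by (subst sum.reindex) (auto simp: inj_on_def)
    also have "\<dots> \<le> \<epsilon>"
      using K by (intro K0) auto
    finally show ?case .
  qed
  then show ?thesis using that by blast
qed

section \<open>Tail events\<close>

lemma (in prob_space) prob_limsup_ge:
  assumes A: "\<And>k. A k \<in> events" and bound: "eventually (\<lambda>k. c \<le> prob (A k)) sequentially"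
  shows "c \<le> prob (limsup A)"
proof -
  define U where "U j = (\<Union>k\<in>{j..}. A k)" for j
  obtain N where N: "\<And>k. N \<le> k \<Longrightarrow> c \<le> prob (A k)"
    using bound by (auto simp: eventually_sequentially)
  have "decseq U"
    unfolding U_def by (intro antimonoI UN_mono) auto
  moreover have "range U \<subseteq> events"
    using A by (auto simp: U_def)
  ultimately have "(\<lambda>j. prob (U j)) \<longlonglongrightarrow> prob (\<Inter>j. U j)"
    by (intro finite_Lim_measure_decseq)
  moreover have "c \<le> prob (U j)" for j
  proof -
    have "c \<le> prob (A (max j N))" by (rule N) simp
    also have "\<dots> \<le> prob (U j)"
      using A by (intro finite_measure_mono) (auto simp: U_def intro!: bexI[of _ "max j N"])
    finally show ?thesis .
  qed
  ultimately have "c \<le> prob (\<Inter>j. U j)"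
    by (intro LIMSEQ_le_const) auto
  then show ?thesis by (simp add: limsup_INF_SUP U_def)
qed

lemma (in prob_space) limsup_in_tail_events:
  fixes F :: "nat \<Rightarrow> 'a set set"
  assumes F: "\<And>i. F i \<subseteq> Pow (space M)" and lo: "filterlim lo at_top sequentially"
    and A: "\<And>k. A k \<in> sigma_sets (space M) (\<Union> (F ` {lo k..}))"
  shows "limsup A \<in> tail_events F"
  unfolding tail_events_def
proof
  fix m :: nat
  obtain k0 where k0: "\<And>k. k0 \<le> k \<Longrightarrow> m \<le> lo k"
    using lo unfolding filterlim_at_top eventually_sequentially by blast
  have "limsup A = (\<Inter>j. \<Union>k\<in>{max j k0..}. A k)"
    unfolding limsup_INF_SUP by (auto simp: Bex_def) (metis max.cobounded1 order_trans)
  also have "\<dots> \<in> sigma_sets (space M) (\<Union> (F ` {m..}))"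
  proof (rule sigma_sets_Inter)
    show "\<Union> (F ` {m..}) \<subseteq> Pow (space M)" using F by auto
    fix j
    have "A k \<in> sigma_sets (space M) (\<Union> (F ` {m..}))" if "k \<in> {max j k0..}" for k
    proof -
      have "m \<le> lo k" using k0 that by simp
      then have "\<Union> (F ` {lo k..}) \<subseteq> \<Union> (F ` {m..})"
        by (intro UN_mono) auto
      then show ?thesis
        using A[of k] sigma_sets_mono'[of "\<Union> (F ` {lo k..})"] by blast
    qed
    then show "(\<Union>k\<in>{max j k0..}. A k) \<in> sigma_sets (space M) (\<Union> (F ` {m..}))"
      by (intro sigma_sets_UNION) auto
  qed
  finally show "limsup A \<in> sigma_sets (space M) (\<Union> (F ` {m..}))" .
qed

lemma (in prob_space) prob_ultimately_eq_0:
  assumes "prob {\<omega> \<in> space M. \<forall>m. \<exists>k\<ge>m. \<not> P k \<omega>} = 1"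
  shows "prob {\<omega> \<in> space M. \<exists>m. \<forall>k\<ge>m. P k \<omega>} = 0"
proof -
  let ?io = "{\<omega> \<in> space M. \<forall>m. \<exists>k\<ge>m. \<not> P k \<omega>}"
  have "?io \<in> events"
    using assms measure_notin_sets[of ?io M] by fastforce
  moreover have "{\<omega> \<in> space M. \<exists>m. \<forall>k\<ge>m. P k \<omega>} = space M - ?io"
    by auto
  ultimately show ?thesis
    using assms by (simp add: prob_compl)
qed

section \<open>Rademacher sums\<close>

locale rademacher_sequence = prob_space +
  fixes \<xi> :: "nat \<Rightarrow> 'a \<Rightarrow> real"
  assumes indep: "indep_vars (\<lambda>_. borel) \<xi> UNIV"
    and prob_plus_one: "\<And>i. prob {\<omega> \<in> space M. \<xi> i \<omega> = 1} = 1/2"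
    and prob_minus_one: "\<And>i. prob {\<omega> \<in> space M. \<xi> i \<omega> = -1} = 1/2"
begin

lemma borel_measurable_xi[measurable]: "\<xi> i \<in> borel_measurable M"
  using indep by (simp add: indep_vars_def)

lemma AE_xi_sign: "AE \<omega> in M. \<xi> i \<omega> = 1 \<or> \<xi> i \<omega> = -1"
proof -
  have "prob ({\<omega> \<in> space M. \<xi> i \<omega> = 1} \<union> {\<omega> \<in> space M. \<xi> i \<omega> = -1}) = 1"
    using prob_plus_one[of i] prob_minus_one[of i] by (subst finite_measure_Union) auto
  then have "AE \<omega> in M. \<omega> \<in> {\<omega> \<in> space M. \<xi> i \<omega> = 1} \<union> {\<omega> \<in> space M. \<xi> i \<omega> = -1}"
    by (intro AE_prob_1) simp
  then show ?thesis by auto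
qed

lemma integrable_xi_mult: "integrable M (\<lambda>\<omega>. \<xi> i \<omega> * \<xi> j \<omega>)"
proof (rule integrable_const_bound[where B=1])
  show "AE \<omega> in M. norm (\<xi> i \<omega> * \<xi> j \<omega>) \<le> 1"
    using AE_xi_sign[of i] AE_xi_sign[of j] by eventually_elim auto
qed simp

lemma integrable_xi: "integrable M (\<xi> i)"
proof (rule integrable_const_bound[where B=1])
  show "AE \<omega> in M. norm (\<xi> i \<omega>) \<le> 1"
    using AE_xi_sign[of i] by eventually_elim auto
qed simp

lemma expectation_xi: "expectation (\<xi> i) = 0"
proof -
  have "AE \<omega> in M. \<xi> i \<omega> = indicator {\<omega> \<in> space M. \<xi> i \<omega> = 1} \<omega> - indicator {\<omega> \<in> space M. \<xi> i \<omega> = -1} \<omega>"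
    using AE_xi_sign[of i] AE_space by eventually_elim (auto simp: indicator_def)
  then have "expectation (\<xi> i) = expectation (\<lambda>\<omega>.
      indicator {\<omega> \<in> space M. \<xi> i \<omega> = 1} \<omega> - indicator {\<omega> \<in> space M. \<xi> i \<omega> = -1} \<omega> :: real)"
    by (intro integral_cong_AE) auto
  also have "\<dots> = prob {\<omega> \<in> space M. \<xi> i \<omega> = 1} - prob {\<omega> \<in> space M. \<xi> i \<omega> = -1}"
    by (subst Bochner_Integration.integral_diff)
      (auto intro!: integrable_real_indicator simp: emeasure_eq_measure)
  finally show ?thesis
    using prob_plus_one[of i] prob_minus_one[of i] by simp
qed

lemma expectation_xi_mult: "expectation (\<lambda>\<omega>. \<xi> i \<omega> * \<xi> j \<omega>) = (if i = j then 1 else 0)"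
proof (cases "i = j")
  case True
  have "AE \<omega> in M. \<xi> i \<omega> * \<xi> i \<omega> = 1"
    using AE_xi_sign[of i] by eventually_elim auto
  then have "expectation (\<lambda>\<omega>. \<xi> i \<omega> * \<xi> i \<omega>) = expectation (\<lambda>_. 1)"
    by (intro integral_cong_AE) auto
  then show ?thesis using True by (simp add: prob_space)
next
  case False
  have ij: "indep_vars (\<lambda>_. borel) \<xi> {i, j}"
    by (rule indep_vars_subset[OF indep]) auto
  have "expectation (\<lambda>\<omega>. \<Prod>k\<in>{i,j}. \<xi> k \<omega>) = (\<Prod>k\<in>{i,j}. expectation (\<xi> k))"
    by (rule indep_vars_lebesgue_integral[OF _ ij]) (auto intro: integrable_xi)
  then show ?thesis
    using False by (simp add: expectation_xi)
qed

lemma second_moment_weighted_sum: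
  fixes w :: "nat \<Rightarrow> real" assumes R: "finite R"
  shows "integrable M (\<lambda>\<omega>. (\<Sum>i\<in>R. w i * \<xi> i \<omega>)\<^sup>2)"
    and "expectation (\<lambda>\<omega>. (\<Sum>i\<in>R. w i * \<xi> i \<omega>)\<^sup>2) = (\<Sum>i\<in>R. (w i)\<^sup>2)"
proof -
  have square: "(\<lambda>\<omega>. (\<Sum>i\<in>R. w i * \<xi> i \<omega>)\<^sup>2) = (\<lambda>\<omega>. \<Sum>i\<in>R. \<Sum>j\<in>R. (w i * w j) * (\<xi> i \<omega> * \<xi> j \<omega>))"
    by (simp add: power2_eq_square sum_product algebra_simps)
  show "integrable M (\<lambda>\<omega>. (\<Sum>i\<in>R. w i * \<xi> i \<omega>)\<^sup>2)"
    unfolding square by (intro Bochner_Integration.integrable_sum integrable_mult_right integrable_xi_mult)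
  have "expectation (\<lambda>\<omega>. (\<Sum>i\<in>R. w i * \<xi> i \<omega>)\<^sup>2) = (\<Sum>i\<in>R. \<Sum>j\<in>R. if i = j then (w i)\<^sup>2 else 0)"
    unfolding square
    by (simp add: Bochner_Integration.integral_sum integrable_xi_mult expectation_xi_mult power2_eq_square
        if_distrib cong: if_cong)
  also have "\<dots> = (\<Sum>i\<in>R. (w i)\<^sup>2)" using R by (simp add: sum.delta)
  finally show "expectation (\<lambda>\<omega>. (\<Sum>i\<in>R. w i * \<xi> i \<omega>)\<^sup>2) = (\<Sum>i\<in>R. (w i)\<^sup>2)" .
qed

lemma prob_weighted_sum_ge:
  fixes w :: "nat \<Rightarrow> real" assumes "finite R" "0 < r"
  shows "prob {\<omega> \<in> space M. r \<le> \<bar>\<Sum>i\<in>R. w i * \<xi> i \<omega>\<bar>} \<le> (\<Sum>i\<in>R. (w i)\<^sup>2) / r\<^sup>2"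
  using second_moment_method[OF _ second_moment_weighted_sum(1)[OF assms(1)] assms(2)]
    second_moment_weighted_sum(2)[OF assms(1)] by simp

lemma prob_signs:
  assumes S: "finite S" and s: "\<forall>i. s i = 1 \<or> s i = -1"
  shows "prob {\<omega> \<in> space M. \<forall>i\<in>S. \<xi> i \<omega> = s i} = (1/2) ^ card S"
proof (cases "S = {}")
  case False
  have "prob (\<Inter>i\<in>S. \<xi> i -` {s i} \<inter> space M) = (\<Prod>i\<in>S. prob (\<xi> i -` {s i} \<inter> space M))"
    by (rule indep_varsD[OF indep False S]) auto
  moreover have "prob (\<xi> i -` {s i} \<inter> space M) = 1/2" for i
    using s[rule_format, of i] prob_plus_one[of i] prob_minus_one[of i]
    by (auto simp: vimage_def Int_def conj_commute)
  moreover have "{\<omega> \<in> space M. \<forall>i\<in>S. \<xi> i \<omega> = s i} = (\<Inter>i\<in>S. \<xi> i -` {s i} \<inter> space M)"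
    using False by auto
  ultimately show ?thesis by simp
qed (simp add: prob_space)

lemma prob_signs_and_weighted_sum:
  fixes w :: "nat \<Rightarrow> real"
  assumes S: "finite S" and s: "\<forall>i. s i = 1 \<or> s i = -1"
    and R: "finite R" "S \<inter> R = {}" and Q: "Q \<in> sets borel"
  shows "prob {\<omega> \<in> space M. (\<forall>i\<in>S. \<xi> i \<omega> = s i) \<and> (\<Sum>i\<in>R. w i * \<xi> i \<omega>) \<in> Q} =
    (1/2) ^ card S * prob {\<omega> \<in> space M. (\<Sum>i\<in>R. w i * \<xi> i \<omega>) \<in> Q}"
proof -
  define K where "K b = (if b then S else R)" for b :: bool
  define X where "X b \<omega> = restrict (\<lambda>i. \<xi> i \<omega>) (K b)" for b \<omega>
  define C where "C b = (if b then PiE S (\<lambda>i. {s i})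
    else (\<lambda>f. \<Sum>i\<in>R. w i * f i) -` Q \<inter> space (PiM R (\<lambda>_. borel)))" for b
  have indep_blocks: "indep_vars (\<lambda>b. PiM (K b) (\<lambda>_. borel)) X UNIV"
    unfolding X_def
    by (rule indep_vars_restrict[OF indep]) (use R in \<open>auto simp: disjoint_family_on_def K_def\<close>)
  have "C b \<in> sets (PiM (K b) (\<lambda>_. borel))" for b
  proof (cases b)
    case False
    have "(\<lambda>f. \<Sum>i\<in>R. w i * f i) \<in> borel_measurable (PiM R (\<lambda>_. borel))"
      by measurable
    then show ?thesis unfolding C_def K_def using False Q by (auto intro: measurable_sets)
  qed (use S in \<open>auto simp: C_def K_def intro!: sets_PiM_I_finite\<close>)
  then have "prob (\<Inter>b\<in>UNIV. X b -` C b \<inter> space M) = (\<Prod>b\<in>UNIV. prob (X b -` C b \<inter> space M))"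
    by (intro indep_varsD[OF indep_blocks]) auto
  moreover have "X True -` C True \<inter> space M = {\<omega> \<in> space M. \<forall>i\<in>S. \<xi> i \<omega> = s i}"
    and "X False -` C False \<inter> space M = {\<omega> \<in> space M. (\<Sum>i\<in>R. w i * \<xi> i \<omega>) \<in> Q}"
    by (auto simp: X_def K_def C_def PiE_iff space_PiM)
  moreover have "(\<Inter>b\<in>UNIV. X b -` C b \<inter> space M) =
      {\<omega> \<in> space M. (\<forall>i\<in>S. \<xi> i \<omega> = s i) \<and> (\<Sum>i\<in>R. w i * \<xi> i \<omega>) \<in> Q}"
    unfolding UNIV_bool using calculation(2,3) by auto
  ultimately show ?thesis
    using prob_signs[OF S s] by (simp add: UNIV_bool)
qed

lemma weighted_sum_split:
  "finite I \<Longrightarrow> S \<subseteq> I \<Longrightarrow>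
    (\<Sum>i\<in>I. w i * \<xi> i \<omega>) = (\<Sum>i\<in>S. w i * \<xi> i \<omega>) + (\<Sum>i\<in>I - S. w i * \<xi> i \<omega>)"
  by (metis add.commute sum.subset_diff)

lemma prob_small_weighted_sum:
  fixes w s :: "nat \<Rightarrow> real"
  assumes I: "finite I" "S \<subseteq> I" and s: "\<forall>i. s i = 1 \<or> s i = -1" and u: "0 < u"
    and balanced: "\<bar>\<Sum>i\<in>S. s i * w i\<bar> \<le> u" and rest: "(\<Sum>i\<in>I - S. (w i)\<^sup>2) \<le> u\<^sup>2 / 2"
  shows "(1/2) ^ card S / 2 \<le> prob {\<omega> \<in> space M. \<bar>\<Sum>i\<in>I. w i * \<xi> i \<omega>\<bar> \<le> 2 * u}"
proof -
  define B where "B \<omega> = (\<Sum>i\<in>I - S. w i * \<xi> i \<omega>)" for \<omega>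
  have S: "finite S" "S \<inter> (I - S) = {}" using I finite_subset by auto
  have "prob {\<omega> \<in> space M. u \<le> \<bar>B \<omega>\<bar>} \<le> (\<Sum>i\<in>I - S. (w i)\<^sup>2) / u\<^sup>2"
    unfolding B_def using I u by (intro prob_weighted_sum_ge) auto
  also have "\<dots> \<le> 1/2" using rest u by (simp add: field_simps)
  finally have "1/2 \<le> prob (space M - {\<omega> \<in> space M. u \<le> \<bar>B \<omega>\<bar>})"
    by (subst prob_compl) (auto simp: B_def)
  also have "space M - {\<omega> \<in> space M. u \<le> \<bar>B \<omega>\<bar>} = {\<omega> \<in> space M. B \<omega> \<in> {x. \<bar>x\<bar> < u}}"
    by auto
  finally have "(1/2) ^ card S / 2 \<le> (1/2) ^ card S * prob {\<omega> \<in> space M. B \<omega> \<in> {x. \<bar>x\<bar> < u}}"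
    by simp
  also have "\<dots> = prob {\<omega> \<in> space M. (\<forall>i\<in>S. \<xi> i \<omega> = s i) \<and> B \<omega> \<in> {x. \<bar>x\<bar> < u}}"
    unfolding B_def using I by (intro prob_signs_and_weighted_sum[symmetric] S s) auto
  also have "\<dots> \<le> prob {\<omega> \<in> space M. \<bar>\<Sum>i\<in>I. w i * \<xi> i \<omega>\<bar> \<le> 2 * u}"
  proof (rule finite_measure_mono)
    show "{\<omega> \<in> space M. (\<forall>i\<in>S. \<xi> i \<omega> = s i) \<and> B \<omega> \<in> {x. \<bar>x\<bar> < u}}
        \<subseteq> {\<omega> \<in> space M. \<bar>\<Sum>i\<in>I. w i * \<xi> i \<omega>\<bar> \<le> 2 * u}"
    proof
      fix \<omega> assume \<omega>: "\<omega> \<in> {\<omega> \<in> space M. (\<forall>i\<in>S. \<xi> i \<omega> = s i) \<and> B \<omega> \<in> {x. \<bar>x\<bar> < u}}"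
      then have "(\<Sum>i\<in>S. w i * \<xi> i \<omega>) = (\<Sum>i\<in>S. s i * w i)"
        by (auto intro: sum.cong)
      then show "\<omega> \<in> {\<omega> \<in> space M. \<bar>\<Sum>i\<in>I. w i * \<xi> i \<omega>\<bar> \<le> 2 * u}"
        using \<omega> weighted_sum_split[OF I, of w \<omega>] balanced by (auto simp: B_def)
    qed
  qed measurable
  finally show ?thesis .
qed

(* Signs +1 on S with a nonnegative rest, or -1 on S with a nonpositive rest: as
   P(rest >= 0) + P(rest <= 0) >= 1, these disjoint events have total probability >= 2^-|S|. *)
lemma prob_large_weighted_sum:
  fixes w :: "nat \<Rightarrow> real"
  assumes I: "finite I" "S \<subseteq> I" "S \<noteq> {}" and large: "T < (\<Sum>i\<in>S. w i)"
  shows "(1/2) ^ card S \<le> prob {\<omega> \<in> space M. T < \<bar>\<Sum>i\<in>I. w i * \<xi> i \<omega>\<bar>}"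
proof -
  define B where "B \<omega> = (\<Sum>i\<in>I - S. w i * \<xi> i \<omega>)" for \<omega>
  define E where "E s Q = {\<omega> \<in> space M. (\<forall>i\<in>S. \<xi> i \<omega> = s) \<and> B \<omega> \<in> Q}" for s :: real and Q
  have S: "finite S" "S \<inter> (I - S) = {}" using I finite_subset by auto
  have prob_E: "prob (E s Q) = (1/2) ^ card S * prob {\<omega> \<in> space M. B \<omega> \<in> Q}"
    if "s = 1 \<or> s = -1" "Q \<in> sets borel" for s Q
    unfolding E_def B_def using I that
    by (intro prob_signs_and_weighted_sum[of S "\<lambda>_. s"] S) auto
  have "1 \<le> prob {\<omega> \<in> space M. B \<omega> \<in> {0..}} + prob {\<omega> \<in> space M. B \<omega> \<in> {..0}}"
  proof -
    have "prob {\<omega> \<in> space M. B \<omega> \<in> {..<0}} \<le> prob {\<omega> \<in> space M. B \<omega> \<in> {..0}}"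
      by (intro finite_measure_mono) (auto simp: B_def)
    moreover have "prob {\<omega> \<in> space M. B \<omega> \<in> {..<0}} = 1 - prob {\<omega> \<in> space M. B \<omega> \<in> {0..}}"
      by (subst prob_compl[symmetric]) (auto simp: B_def intro!: arg_cong[where f=prob])
    ultimately show ?thesis by linarith
  qed
  then have "(1/2) ^ card S \<le> prob (E 1 {0..}) + prob (E (-1) {..0})"
    using prob_E[of 1 "{0..}"] prob_E[of "-1" "{..0}"] by (simp add: distrib_left[symmetric])
  also have "\<dots> = prob (E 1 {0..} \<union> E (-1) {..0})"
    using I by (intro finite_measure_Union[symmetric]) (auto simp: E_def B_def)
  also have "\<dots> \<le> prob {\<omega> \<in> space M. T < \<bar>\<Sum>i\<in>I. w i * \<xi> i \<omega>\<bar>}"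
  proof (rule finite_measure_mono)
    have "(\<Sum>i\<in>S. w i * \<xi> i \<omega>) = s * (\<Sum>i\<in>S. w i)" if "\<forall>i\<in>S. \<xi> i \<omega> = s" for s \<omega>
      using that by (simp add: sum_distrib_left mult.commute)
    then show "E 1 {0..} \<union> E (-1) {..0} \<subseteq> {\<omega> \<in> space M. T < \<bar>\<Sum>i\<in>I. w i * \<xi> i \<omega>\<bar>}"
      using weighted_sum_split[OF I(1,2), of w] large by (fastforce simp: E_def B_def)
  qed measurable
  finally show ?thesis .
qed

definition coordinate_events :: "nat \<Rightarrow> 'a set set" where
  "coordinate_events i = sigma_sets (space M) {\<xi> i -` B \<inter> space M | B. B \<in> sets borel}"

abbreviation tail_from :: "nat \<Rightarrow> 'a set set" where
  "tail_from m \<equiv> sigma_sets (space M) (\<Union> (coordinate_events ` {m..}))"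

lemma coordinate_events_subset: "coordinate_events i \<subseteq> events"
  unfolding coordinate_events_def
  by (rule sets.sigma_sets_subset) (auto intro: measurable_sets)

lemma coordinate_events_Pow: "coordinate_events i \<subseteq> Pow (space M)"
  using coordinate_events_subset sets.sets_into_space by blast

lemma tail_from_subset: "tail_from m \<subseteq> events"
  using coordinate_events_subset by (intro sets.sigma_sets_subset) auto

lemma weighted_sum_in_tail_from:
  fixes w :: "nat \<Rightarrow> real"
  assumes "I \<subseteq> {m..}" "Q \<in> sets borel"
  shows "{\<omega> \<in> space M. (\<Sum>i\<in>I. w i * \<xi> i \<omega>) \<in> Q} \<in> tail_from m"
proof -
  let ?N = "sigma (space M) (\<Union> (coordinate_events ` {m..}))"
  have gen: "\<Union> (coordinate_events ` {m..}) \<subseteq> Pow (space M)"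
    using coordinate_events_Pow by blast
  have "\<xi> i \<in> borel_measurable ?N" if "m \<le> i" for i
  proof (rule measurableI)
    fix B :: "real set" assume "B \<in> sets borel"
    then have "\<xi> i -` B \<inter> space M \<in> \<Union> (coordinate_events ` {m..})"
      using that unfolding coordinate_events_def by blast
    then show "\<xi> i -` B \<inter> space ?N \<in> sets ?N"
      using gen by (simp add: space_measure_of_conv sets_measure_of_conv)
  qed simp
  then have "(\<lambda>\<omega>. \<Sum>i\<in>I. w i * \<xi> i \<omega>) \<in> borel_measurable ?N"
    using assms(1) by (intro borel_measurable_sum borel_measurable_times borel_measurable_const) auto
  from measurable_sets[OF this assms(2)] show ?thesis
    using gen by (simp add: space_measure_of_conv sets_measure_of_conv vimage_def Int_def conj_commute)
qed

lemma prob_infinitely_often_eq_1: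
  assumes lo: "filterlim lo at_top sequentially"
    and tail: "\<And>k. {\<omega> \<in> space M. P k \<omega>} \<in> tail_from (lo k)"
    and bound: "eventually (\<lambda>k. c \<le> prob {\<omega> \<in> space M. P k \<omega>}) sequentially" and c: "0 < c"
  shows "prob {\<omega> \<in> space M. \<forall>m. \<exists>k\<ge>m. P k \<omega>} = 1"
proof -
  define A where "A k = {\<omega> \<in> space M. P k \<omega>}" for k
  have io: "{\<omega> \<in> space M. \<forall>m. \<exists>k\<ge>m. P k \<omega>} = limsup A"
    by (auto simp: limsup_INF_SUP A_def)
  have "c \<le> prob (limsup A)"
    using tail tail_from_subset bound unfolding A_def by (intro prob_limsup_ge) auto
  moreover have "prob (limsup A) = 0 \<or> prob (limsup A) = 1"
  proof (rule kolmogorov_0_1_law)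
    show "sigma_algebra (space M) (coordinate_events i)" for i
      unfolding coordinate_events_def by (rule sigma_algebra_sigma_sets) auto
    show "indep_sets coordinate_events UNIV"
      using indep unfolding indep_vars_def coordinate_events_def by simp
    show "limsup A \<in> tail_events coordinate_events"
      by (rule limsup_in_tail_events[OF coordinate_events_Pow lo]) (simp add: A_def tail)
  qed
  ultimately show ?thesis using c io by auto
qed

lemma Yhat_in_tail_from:
  assumes "{x. P x} \<in> sets borel"
  shows "{\<omega> \<in> space M. P (Yhat \<sigma> H \<xi> n \<omega>)} \<in> tail_from (iH H n)"
  using weighted_sum_in_tail_from[of "{iH H n..n-1}" "iH H n" "{x. P x}" "jH \<sigma> H n"] assms
  by (simp add: Yhat_def)

lemma prob_Yhat_small:
  assumes H: "1/2 < H" "H < 1" and \<sigma>: "0 < \<sigma>"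
  shows "\<exists>q>0. \<forall>\<^sub>F n in sequentially. q \<le> prob {\<omega> \<in> space M. \<bar>Yhat \<sigma> H \<xi> n \<omega>\<bar> \<le> gH \<sigma> H n / 2}"
proof -
  define u where "u = \<sigma> * CH H / 16"
  have u: "0 < u" using CH_pos[OF H] \<sigma> by (simp add: u_def)
  obtain K1 where K1: "\<And>K. K1 \<le> K \<Longrightarrow> \<forall>\<^sub>F n in sequentially. K + iH H n \<le> n \<and>
      (\<exists>s. (\<forall>i. s i = 1 \<or> s i = -1) \<and> \<bar>\<Sum>i\<in>{n-K..<n}. s i * jH \<sigma> H n i\<bar> \<le> u)"
    using jH_balanced_block[OF H \<sigma> u] by blast
  obtain K2 where K2: "\<And>K. K2 \<le> K \<Longrightarrow> \<forall>\<^sub>F n in sequentially. (\<Sum>i\<in>{iH H n..<n-K}. (jH \<sigma> H n i)\<^sup>2) \<le> u\<^sup>2 / 2"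
    using jH_square_sum_tail[OF H \<sigma>, of "u\<^sup>2 / 2"] u by auto
  define K where "K = max K1 K2"
  have "K1 \<le> K" "K2 \<le> K" by (simp_all add: K_def)
  have "\<forall>\<^sub>F n in sequentially. (1/2) ^ K / 2 \<le> prob {\<omega> \<in> space M. \<bar>Yhat \<sigma> H \<xi> n \<omega>\<bar> \<le> gH \<sigma> H n / 2}"
    using K1[OF \<open>K1 \<le> K\<close>] K2[OF \<open>K2 \<le> K\<close>] eventually_ge_at_top[of 2]
  proof eventually_elim
    case (elim n)
    then obtain s where s: "\<forall>i. s i = 1 \<or> s i = -1" "\<bar>\<Sum>i\<in>{n-K..<n}. s i * jH \<sigma> H n i\<bar> \<le> u"
      by blast
    have blocks: "{n-K..<n} \<subseteq> {iH H n..n-1}" "{iH H n..n-1} - {n-K..<n} = {iH H n..<n-K}"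
      using elim by auto
    have "(1/2) ^ K / 2 \<le> prob {\<omega> \<in> space M. \<bar>\<Sum>i\<in>{iH H n..n-1}. jH \<sigma> H n i * \<xi> i \<omega>\<bar> \<le> 2 * u}"
      using prob_small_weighted_sum[of "{iH H n..n-1}" "{n-K..<n}" s u "jH \<sigma> H n"] blocks s u elim
      by (simp add: mult.commute)
    also have "\<dots> \<le> prob {\<omega> \<in> space M. \<bar>Yhat \<sigma> H \<xi> n \<omega>\<bar> \<le> gH \<sigma> H n / 2}"
      using gH_lower[OF H \<sigma>, of n] elim unfolding Yhat_def u_def
      by (intro finite_measure_mono) auto
    finally show ?case .
  qed
  then show ?thesis by (intro exI[of _ "(1/2) ^ K / 2"]) auto
qed

lemma prob_Yhat_large:
  assumes H: "1/2 < H" "H < 1" and \<sigma>: "0 < \<sigma>"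
  shows "\<exists>q>0. \<forall>\<^sub>F n in sequentially. q \<le> prob {\<omega> \<in> space M. 2 * gH \<sigma> H n < \<bar>Yhat \<sigma> H \<xi> n \<omega>\<bar>}"
proof -
  obtain K where K: "1 \<le> K" "\<forall>\<^sub>F n in sequentially. K + iH H n \<le> n \<and>
      \<sigma> * CH H * (4 * singular_mass H) < (\<Sum>i\<in>{n-K..<n}. jH \<sigma> H n i)"
    using jH_large_block[OF H \<sigma>] by blast
  have "\<forall>\<^sub>F n in sequentially. (1/2) ^ K \<le> prob {\<omega> \<in> space M. 2 * gH \<sigma> H n < \<bar>Yhat \<sigma> H \<xi> n \<omega>\<bar>}"
    using K(2) eventually_ge_at_top[of 2]
  proof eventually_elim
    case (elim n)
    have "{n-K..<n} \<subseteq> {iH H n..n-1}" "{n-K..<n} \<noteq> {}" "card {n-K..<n} = K"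
      using elim K(1) by auto
    moreover have "2 * gH \<sigma> H n < (\<Sum>i\<in>{n-K..<n}. jH \<sigma> H n i)"
      using gH_upper[OF H \<sigma>, of n] elim by linarith
    ultimately show ?case
      using prob_large_weighted_sum[of "{iH H n..n-1}" "{n-K..<n}" "2 * gH \<sigma> H n" "jH \<sigma> H n"]
      by (simp add: Yhat_def)
  qed
  then show ?thesis by (intro exI[of _ "(1/2) ^ K"]) auto
qed

lemma prob_Yhat_subsequence_io:
  fixes nk :: "nat \<Rightarrow> nat" and P :: "nat \<Rightarrow> real \<Rightarrow> bool"
  assumes nk: "strict_mono nk" and H: "1/2 < H" "H < 1"
    and P: "\<And>n. {x. P n x} \<in> sets borel"
    and bound: "\<exists>q>0. \<forall>\<^sub>F n in sequentially. q \<le> prob {\<omega> \<in> space M. P n (Yhat \<sigma> H \<xi> n \<omega>)}"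
  shows "prob {\<omega> \<in> space M. \<forall>m. \<exists>k\<ge>m. P (nk k) (Yhat \<sigma> H \<xi> (nk k) \<omega>)} = 1"
proof -
  obtain q where q: "0 < q" "\<forall>\<^sub>F n in sequentially. q \<le> prob {\<omega> \<in> space M. P n (Yhat \<sigma> H \<xi> n \<omega>)}"
    using bound by blast
  have nk_lim: "filterlim nk at_top sequentially"
    using nk by (rule filterlim_subseq)
  show ?thesis
  proof (rule prob_infinitely_often_eq_1[OF _ _ _ q(1)])
    show "filterlim (\<lambda>k. iH H (nk k)) at_top sequentially"
      using filterlim_compose[OF filterlim_iH[OF H] nk_lim] by simp
    show "{\<omega> \<in> space M. P (nk k) (Yhat \<sigma> H \<xi> (nk k) \<omega>)} \<in> tail_from (iH H (nk k))" for k
      by (rule Yhat_in_tail_from[OF P])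
    show "\<forall>\<^sub>F k in sequentially. q \<le> prob {\<omega> \<in> space M. P (nk k) (Yhat \<sigma> H \<xi> (nk k) \<omega>)}"
      using nk_lim q(2) unfolding filterlim_iff by blast
  qed
qed

end

theorem lemma6p2:
  fixes M :: "'a measure" and \<xi> :: "nat \<Rightarrow> 'a \<Rightarrow> real"
    and \<sigma> hc :: real and nk :: "nat \<Rightarrow> nat"
  assumes "prob_space M"
    and "prob_space.indep_vars M (\<lambda>_. borel) \<xi> UNIV"
    and "\<And>i. measure M {\<omega> \<in> space M. \<xi> i \<omega> = 1} = 1/2"
    and "\<And>i. measure M {\<omega> \<in> space M. \<xi> i \<omega> = -1} = 1/2"
    and "is_hc hc"
    and "\<sigma> > 0"
    and "strict_mono nk" and "\<And>k. nk k > 0"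
  shows "(\<forall>H. 1/2 < H \<and> H < 2*hc - 1/2 \<longrightarrow>
            (\<exists>\<epsilon>>0. measure M {\<omega> \<in> space M. \<exists>m. \<forall>k\<ge>m.
                 \<bar>Yhat \<sigma> H \<xi> (nk k) \<omega>\<bar> > gH \<sigma> H (nk k) * (1 - \<epsilon>)} = 0))
       \<and> (\<forall>H. 2*hc - 1/2 < H \<and> H < 1 \<longrightarrow>
            (\<exists>\<delta>>0. measure M {\<omega> \<in> space M. \<forall>m. \<exists>k\<ge>m.
                 \<bar>Yhat \<sigma> H \<xi> (nk k) \<omega>\<bar> > gH \<sigma> H (nk k) * (1 + \<delta>)} = 1))"
proof -
  interpret rademacher_sequence M \<xi>
    using assms(1-4) by (simp add: rademacher_sequence_def rademacher_sequence_axioms_def)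
  have hc: "1/2 < hc" "hc < 3/4"
    using assms(5) by (simp_all add: is_hc_def)
  have small_io: "prob {\<omega> \<in> space M. \<forall>m. \<exists>k\<ge>m. \<bar>Yhat \<sigma> H \<xi> (nk k) \<omega>\<bar> \<le> gH \<sigma> H (nk k) / 2} = 1"
    and large_io: "prob {\<omega> \<in> space M. \<forall>m. \<exists>k\<ge>m. 2 * gH \<sigma> H (nk k) < \<bar>Yhat \<sigma> H \<xi> (nk k) \<omega>\<bar>} = 1"
    if H: "1/2 < H" "H < 1" for H
    using prob_Yhat_subsequence_io[OF assms(7) H _ prob_Yhat_small[OF H assms(6)]]
      prob_Yhat_subsequence_io[OF assms(7) H _ prob_Yhat_large[OF H assms(6)]]
    by simp_all
  show ?thesis
  proof (intro conjI allI impI)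
    fix H assume "1/2 < H \<and> H < 2*hc - 1/2"
    then have H: "1/2 < H" "H < 1" using hc by auto
    show "\<exists>\<epsilon>>0. prob {\<omega> \<in> space M. \<exists>m. \<forall>k\<ge>m. \<bar>Yhat \<sigma> H \<xi> (nk k) \<omega>\<bar> > gH \<sigma> H (nk k) * (1 - \<epsilon>)} = 0"
      using prob_ultimately_eq_0[of "\<lambda>k \<omega>. \<bar>Yhat \<sigma> H \<xi> (nk k) \<omega>\<bar> > gH \<sigma> H (nk k) / 2"] small_io[OF H]
      by (intro exI[of _ "1/2"]) (simp add: not_less)
  next
    fix H assume "2*hc - 1/2 < H \<and> H < 1"
    then have H: "1/2 < H" "H < 1" using hc by auto
    show "\<exists>\<delta>>0. prob {\<omega> \<in> space M. \<forall>m. \<exists>k\<ge>m. \<bar>Yhat \<sigma> H \<xi> (nk k) \<omega>\<bar> > gH \<sigma> H (nk k) * (1 + \<delta>)} = 1"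
      using large_io[OF H] by (intro exI[of _ 1]) (simp add: mult.commute)
  qed
qed

end
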